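(* Let $(A_1,\lambda_1)\in\Lambda^*_{2,p}$, let $\varphi:(A_1,\lambda_1)\to(A,\lambda)$ be a degree-$p$ isogeny onto a principally polarized abelian surface with $\varphi^*\lambda=\lambda_1$, corresponding to $\xi\in\mathbf P^1(k)$ with $\xi\notin\mathbf P^1(\mathbb F_{p^2})$, and let $M$ (with $VN\subset M\subset N$) be the covariant Dieudonné module of $A$. Then $\ker\pi\subset U_x$, where $U_x=\{\phi\in U_{x_1}:\phi(M)=M\}$.
   Context: $k$ is algebraically closed of characteristic $p$, $W=W(k)$. $\Lambda^*_{2,p}$ is the set of isomorphism classes of polarized superspecial abelian surfaces $(A_1,\lambda_1)$ over $k$ with $\deg\lambda_1=p^2$ and $\ker\lambda_1\simeq\alpha_p\times\alpha_p$. Let $(M_1,\langle\,,\rangle)$ be the covariant Dieudonné module of $A_1$ with pairing from $\lambda_1$, $N\subset M_1\otimes\mathbb Q$ with $VN=M_1$, $\langle\,,\rangle_N=p\langle\,,\rangle$, and $U_{x_1}=\mathrm{Aut}_{\mathcal{DM}}(N,\langle\,,\rangle_N)$ (automorphisms commuting with $F,V$ preserving the pairing). There is a $W$-basis $e_1,\dots,e_4$ of $N$ with $Fe_1=e_2,Fe_2=-pe_1,Fe_3=e_4,Fe_4=-pe_3$, $\langle e_1,e_3\rangle_N=1$, $\langle e_2,e_4\rangle_N=p$ (other pairings of basis vectors zero up to antisymmetry). $\tilde N$ is the $W(\mathbb F_{p^2})$-span of the $e_i$, $V_0=\tilde N/V\tilde N=\mathbb F_{p^2}\bar e_1\oplus\mathbb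 F_{p^2}\bar e_3$ with induced pairing, and $\pi:U_{x_1}\to\mathrm{Aut}(V_0,\langle\,,\rangle)=\mathrm{SL}_2(\mathbb F_{p^2})$ is the induced homomorphism. Via $\varphi_*$, $M_1\subset M$, and $M=VN+Wv$ with $v=a'e_1+b'e_3$, where $\xi=[a:b]$ (coordinates with respect to $\bar e_1,\bar e_3$) and $a',b'\in W$ lift $a,b$. *)

theory Defs
  imports "HOL-Computational_Algebra.Polynomial"
begin

(* Elements of N are written in coordinates w.r.t. the W-basis e1,e2,e3,e4:
   (x1,x2,x3,x4) stands for x1 e1 + x2 e2 + x3 e3 + x4 e4. *)
type_synonym 'w vec4 = "'w \<times> 'w \<times> 'w \<times> 'w"

definition add4 :: "'w::comm_ring_1 vec4 \<Rightarrow> 'w vec4 \<Rightarrow> 'w vec4" where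
  "add4 x y = (case x of (x1,x2,x3,x4) \<Rightarrow> case y of (y1,y2,y3,y4) \<Rightarrow>
      (x1+y1, x2+y2, x3+y3, x4+y4))"

definition diff4 :: "'w::comm_ring_1 vec4 \<Rightarrow> 'w vec4 \<Rightarrow> 'w vec4" where
  "diff4 x y = (case x of (x1,x2,x3,x4) \<Rightarrow> case y of (y1,y2,y3,y4) \<Rightarrow>
      (x1-y1, x2-y2, x3-y3, x4-y4))"

definition smul4 :: "'w::comm_ring_1 \<Rightarrow> 'w vec4 \<Rightarrow> 'w vec4" where
  "smul4 c x = (case x of (x1,x2,x3,x4) \<Rightarrow> (c*x1, c*x2, c*x3, c*x4))"

(* Frobenius F: sigma-semilinear, Fe1=e2, Fe2=-p e1, Fe3=e4, Fe4=-p e3 *)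
definition Fop :: "('w::comm_ring_1 \<Rightarrow> 'w) \<Rightarrow> nat \<Rightarrow> 'w vec4 \<Rightarrow> 'w vec4" where
  "Fop \<sigma> p x = (case x of (x1,x2,x3,x4) \<Rightarrow>
      (- (of_nat p * \<sigma> x2), \<sigma> x1, - (of_nat p * \<sigma> x4), \<sigma> x3))"

(* Verschiebung V = p F^{-1}: sigma^{-1}-semilinear,
   Ve1=-e2, Ve2=p e1, Ve3=-e4, Ve4=p e3 *)
definition Vop :: "('w::comm_ring_1 \<Rightarrow> 'w) \<Rightarrow> nat \<Rightarrow> 'w vec4 \<Rightarrow> 'w vec4" where
  "Vop \<sigma> p x = (case x of (x1,x2,x3,x4) \<Rightarrow>
      (of_nat p * inv \<sigma> x2, - inv \<sigma> x1, of_nat p * inv \<sigma> x4, - inv \<sigma> x3))"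

definition pairN :: "nat \<Rightarrow> 'w::comm_ring_1 vec4 \<Rightarrow> 'w vec4 \<Rightarrow> 'w" where
  "pairN p x y = (case x of (x1,x2,x3,x4) \<Rightarrow> case y of (y1,y2,y3,y4) \<Rightarrow>
      x1*y3 - x3*y1 + of_nat p * (x2*y4 - x4*y2))"

definition linear4 :: "('w::comm_ring_1 vec4 \<Rightarrow> 'w vec4) \<Rightarrow> bool" where
  "linear4 \<phi> \<longleftrightarrow> (\<forall>x y. \<phi> (add4 x y) = add4 (\<phi> x) (\<phi> y)) \<and>
                   (\<forall>c x. \<phi> (smul4 c x) = smul4 c (\<phi> x))"

definition U_x1 :: "('w::comm_ring_1 \<Rightarrow> 'w) \<Rightarrow> nat \<Rightarrow> ('w vec4 \<Rightarrow> 'w vec4) set" where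
  "U_x1 \<sigma> p = {\<phi>. linear4 \<phi> \<and> bij \<phi> \<and>
      \<phi> \<circ> Fop \<sigma> p = Fop \<sigma> p \<circ> \<phi> \<and> \<phi> \<circ> Vop \<sigma> p = Vop \<sigma> p \<circ> \<phi> \<and>
      (\<forall>x y. pairN p (\<phi> x) (\<phi> y) = pairN p x y)}"

(* W(F_{p^2}) inside W = W(k): the fixed ring of sigma^2 *)
definition Wp2 :: "('w \<Rightarrow> 'w) \<Rightarrow> 'w set" where
  "Wp2 \<sigma> = {c. \<sigma> (\<sigma> c) = c}"

(* N~ = W(F_{p^2})-span of e1,...,e4 *)
definition Ntilde :: "('w \<Rightarrow> 'w) \<Rightarrow> 'w vec4 set" where
  "Ntilde \<sigma> = {(x1,x2,x3,x4). x1 \<in> Wp2 \<sigma> \<and> x2 \<in> Wp2 \<sigma> \<and> x3 \<in> Wp2 \<sigma> \<and> x4 \<in> Wp2 \<sigma>}"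

(* ker pi: elements of U_{x_1} inducing the identity on V_0 = N~ / V N~ *)
definition ker_pi :: "('w::comm_ring_1 \<Rightarrow> 'w) \<Rightarrow> nat \<Rightarrow> ('w vec4 \<Rightarrow> 'w vec4) set" where
  "ker_pi \<sigma> p = {\<phi> \<in> U_x1 \<sigma> p.
      \<forall>n \<in> Ntilde \<sigma>. diff4 (\<phi> n) n \<in> Vop \<sigma> p ` Ntilde \<sigma>}"

definition Mmod :: "('w::comm_ring_1 \<Rightarrow> 'w) \<Rightarrow> nat \<Rightarrow> 'w vec4 \<Rightarrow> 'w vec4 set" where
  "Mmod \<sigma> p v = {add4 (Vop \<sigma> p y) (smul4 c v) | y c. True}"

definition U_x :: "('w::comm_ring_1 \<Rightarrow> 'w) \<Rightarrow> nat \<Rightarrow> 'w vec4 \<Rightarrow> ('w vec4 \<Rightarrow> 'w vec4) set" where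
  "U_x \<sigma> p v = {\<phi> \<in> U_x1 \<sigma> p. \<phi> ` Mmod \<sigma> p v = Mmod \<sigma> p v}"

end

theory Submission
  imports Defs
begin

text \<open>
  An element of \<open>ker \<pi>\<close> acts trivially on \<open>V\<^sub>0 = \<tilde>N / V\<tilde>N\<close>, so it moves \<open>e\<^sub>1\<close> and \<open>e\<^sub>3\<close>, hence
  every \<open>W\<close>-combination \<open>v = a'e\<^sub>1 + b'e\<^sub>3\<close>, only by elements of \<open>VN\<close>. Since it commutes
  with \<open>V\<close>, it also stabilises \<open>VN\<close>; therefore it stabilises \<open>M = VN + Wv\<close>.
\<close>

definition VN :: "nat \<Rightarrow> 'w::comm_ring_1 vec4 set" where
  "VN p = {(x1, x2, x3, x4). of_nat p dvd x1 \<and> of_nat p dvd x3}"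

lemma range_Vop:
  assumes "inj \<sigma>"
  shows "range (Vop \<sigma> p) = (VN p :: 'w::comm_ring_1 vec4 set)"
proof (intro equalityI subsetI)
  fix x :: "'w vec4" assume "x \<in> range (Vop \<sigma> p)"
  then obtain y where "x = Vop \<sigma> p y" by blast
  then show "x \<in> VN p" by (cases y) (auto simp: Vop_def VN_def)
next
  fix x :: "'w vec4" assume "x \<in> VN p"
  then obtain u x2 u' x4 where x: "x = (of_nat p * u, x2, of_nat p * u', x4)"
    by (auto simp: VN_def dvd_def)
  have "Vop \<sigma> p (\<sigma> (- x2), \<sigma> u, \<sigma> (- x4), \<sigma> u') = x"
    using x by (simp add: Vop_def inv_f_f[OF assms])
  then show "x \<in> range (Vop \<sigma> p)" by (metis rangeI)
qed

lemma add4_VN: "x \<in> VN p \<Longrightarrow> y \<in> VN p \<Longrightarrow> add4 x y \<in> VN p"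
  by (auto simp: VN_def add4_def)

lemma smul4_VN: "x \<in> VN p \<Longrightarrow> smul4 c x \<in> VN p"
  by (auto simp: VN_def smul4_def)

lemma diff4_eq_add4_smul4: "diff4 x y = add4 x (smul4 (- 1) (y :: 'w::comm_ring_1 vec4))"
  by (auto simp: diff4_def add4_def smul4_def split: prod.splits)

lemma linear4_add4: "linear4 \<phi> \<Longrightarrow> \<phi> (add4 x y) = add4 (\<phi> x) (\<phi> y)"
  unfolding linear4_def by blast

lemma linear4_smul4: "linear4 \<phi> \<Longrightarrow> \<phi> (smul4 c x) = smul4 c (\<phi> x)"
  unfolding linear4_def by blast

lemma linear4_diff4:
  "linear4 \<phi> \<Longrightarrow> \<phi> (diff4 x y) = diff4 (\<phi> x) (\<phi> (y :: 'w::comm_ring_1 vec4))"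
  unfolding diff4_eq_add4_smul4 by (simp only: linear4_add4 linear4_smul4)

lemma Mmod_eq_VN_coset:
  assumes "inj \<sigma>"
  shows "Mmod \<sigma> p (v :: 'w::comm_ring_1 vec4) = {x. \<exists>c. diff4 x (smul4 c v) \<in> VN p}"
proof -
  have shift: "add4 y (smul4 c v) = x \<longleftrightarrow> diff4 x (smul4 c v) = y" for x y :: "'w vec4" and c
    by (cases x; cases y; cases v) (auto simp: add4_def diff4_def smul4_def)
  show ?thesis
  proof (intro equalityI subsetI)
    fix x assume "x \<in> Mmod \<sigma> p v"
    then obtain y c where "add4 (Vop \<sigma> p y) (smul4 c v) = x"
      by (auto simp: Mmod_def)
    then have "diff4 x (smul4 c v) \<in> range (Vop \<sigma> p)"
      using shift by blast
    then show "x \<in> {x. \<exists>c. diff4 x (smul4 c v) \<in> VN p}"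
      using range_Vop[OF assms] by blast
  next
    fix x assume "x \<in> {x. \<exists>c. diff4 x (smul4 c v) \<in> VN p}"
    then obtain c where "diff4 x (smul4 c v) \<in> range (Vop \<sigma> p)"
      using range_Vop[OF assms] by blast
    then obtain y where "diff4 x (smul4 c v) = Vop \<sigma> p y"
      by blast
    then have "add4 (Vop \<sigma> p y) (smul4 c v) = x"
      using shift by blast
    then show "x \<in> Mmod \<sigma> p v"
      unfolding Mmod_def by blast
  qed
qed

lemma diff4_smul4_shift:
  fixes x u w :: "'w::comm_ring_1 vec4"
  shows "diff4 x (smul4 c u) = add4 (diff4 x (smul4 c w)) (smul4 c (diff4 w u))"
  by (cases x; cases u; cases w) (simp add: add4_def diff4_def smul4_def algebra_simps)

lemma diff4_add4_smul4:
  fixes x y u w :: "'w::comm_ring_1 vec4"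
  shows "diff4 (add4 (smul4 a x) (smul4 b y)) (add4 (smul4 a u) (smul4 b w))
    = add4 (smul4 a (diff4 x u)) (smul4 b (diff4 y w))"
  by (cases x; cases y; cases u; cases w) (simp add: add4_def diff4_def smul4_def algebra_simps)

lemma diff4_swap: "diff4 x y = smul4 (- 1) (diff4 y (x :: 'w::comm_ring_1 vec4))"
  by (cases x; cases y) (simp add: diff4_def smul4_def)

lemma linear4_stabilises_coset_family:
  fixes R :: "'w::comm_ring_1 vec4 set"
  assumes lin: "linear4 \<phi>" and "bij \<phi>" and R: "\<phi> ` R = R"
    and add_R: "\<And>x y. x \<in> R \<Longrightarrow> y \<in> R \<Longrightarrow> add4 x y \<in> R"
    and smul_R: "\<And>c x. x \<in> R \<Longrightarrow> smul4 c x \<in> R"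
    and moved: "diff4 (\<phi> v) v \<in> R"
  shows "\<phi> ` {x. \<exists>c. diff4 x (smul4 c v) \<in> R} = {x. \<exists>c. diff4 x (smul4 c v) \<in> R}"
    (is "\<phi> ` ?C = ?C")
proof -
  have \<phi>_diff4: "\<phi> (diff4 x (smul4 c v)) = diff4 (\<phi> x) (smul4 c (\<phi> v))" for x c
    by (simp only: linear4_diff4[OF lin] linear4_smul4[OF lin])
  show ?thesis
  proof (intro equalityI subsetI)
    fix z assume "z \<in> \<phi> ` ?C"
    then obtain x c where z: "z = \<phi> x" and "diff4 x (smul4 c v) \<in> R" by blast
    then have "diff4 z (smul4 c (\<phi> v)) \<in> R"
      using R \<phi>_diff4 by (metis imageI)
    then have "add4 (diff4 z (smul4 c (\<phi> v))) (smul4 c (diff4 (\<phi> v) v)) \<in> R"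
      using add_R smul_R moved by blast
    then show "z \<in> ?C"
      unfolding diff4_smul4_shift[of z c v "\<phi> v", symmetric] by blast
  next
    fix z assume "z \<in> ?C"
    then obtain c where z: "diff4 z (smul4 c v) \<in> R" by blast
    obtain x where x: "z = \<phi> x"
      using \<open>bij \<phi>\<close> by (metis bij_pointE)
    have "diff4 v (\<phi> v) \<in> R"
      unfolding diff4_swap[of v] using smul_R moved .
    then have "add4 (diff4 z (smul4 c v)) (smul4 c (diff4 v (\<phi> v))) \<in> R"
      using add_R smul_R z by blast
    then have "\<phi> (diff4 x (smul4 c v)) \<in> R"
      unfolding \<phi>_diff4 x[symmetric] diff4_smul4_shift[of z c "\<phi> v" v, symmetric] .
    then have "diff4 x (smul4 c v) \<in> R"
      using R \<open>bij \<phi>\<close> by (metis bij_is_inj imageE injD)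
    then show "z \<in> \<phi> ` ?C"
      using x by blast
  qed
qed

lemma U_x1_stabilises_VN:
  assumes "inj \<sigma>" and "\<phi> \<in> U_x1 \<sigma> p"
  shows "\<phi> ` VN p = VN p"
proof -
  have "\<phi> \<circ> Vop \<sigma> p = Vop \<sigma> p \<circ> \<phi>" and "surj \<phi>"
    using assms(2) by (auto simp: U_x1_def bij_is_surj)
  have "\<phi> ` range (Vop \<sigma> p) = range (\<phi> \<circ> Vop \<sigma> p)"
    by (rule image_comp)
  also have "\<dots> = Vop \<sigma> p ` range \<phi>"
    unfolding \<open>\<phi> \<circ> Vop \<sigma> p = Vop \<sigma> p \<circ> \<phi>\<close> by (rule image_comp[symmetric])
  also have "\<dots> = range (Vop \<sigma> p)"
    using \<open>surj \<phi>\<close> by simp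
  finally show ?thesis
    unfolding range_Vop[OF assms(1)] .
qed

lemma ker_pi_moves_into_VN:
  fixes a b :: "'w::comm_ring_1"
  assumes "inj \<sigma>" and "\<sigma> 0 = 0" and "\<sigma> 1 = 1" and "\<phi> \<in> ker_pi \<sigma> p"
  shows "diff4 (\<phi> (a, 0, b, 0)) (a, 0, b, 0) \<in> VN p"
proof -
  define e1 e3 :: "'w vec4" where "e1 = (1, 0, 0, 0)" and "e3 = (0, 0, 1, 0)"
  have lin: "linear4 \<phi>"
    using assms(4) by (simp add: ker_pi_def U_x1_def)
  have "e1 \<in> Ntilde \<sigma>" "e3 \<in> Ntilde \<sigma>"
    using assms(2,3) by (auto simp: e1_def e3_def Ntilde_def Wp2_def)
  moreover have "\<forall>n \<in> Ntilde \<sigma>. diff4 (\<phi> n) n \<in> Vop \<sigma> p ` Ntilde \<sigma>"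
    using assms(4) by (simp add: ker_pi_def)
  moreover have "Vop \<sigma> p ` Ntilde \<sigma> \<subseteq> VN p"
    unfolding range_Vop[OF assms(1), symmetric] by blast
  ultimately have e: "diff4 (\<phi> e1) e1 \<in> VN p" "diff4 (\<phi> e3) e3 \<in> VN p"
    by blast+
  have v: "(a, 0, b, 0) = add4 (smul4 a e1) (smul4 b e3)"
    by (simp add: e1_def e3_def add4_def smul4_def)
  have "diff4 (\<phi> (a, 0, b, 0)) (a, 0, b, 0)
      = diff4 (add4 (smul4 a (\<phi> e1)) (smul4 b (\<phi> e3))) (add4 (smul4 a e1) (smul4 b e3))"
    unfolding v by (simp only: linear4_add4[OF lin] linear4_smul4[OF lin])
  also have "\<dots> = add4 (smul4 a (diff4 (\<phi> e1) e1)) (smul4 b (diff4 (\<phi> e3) e3))"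
    by (rule diff4_add4_smul4)
  finally have "diff4 (\<phi> (a, 0, b, 0)) (a, 0, b, 0)
      = add4 (smul4 a (diff4 (\<phi> e1) e1)) (smul4 b (diff4 (\<phi> e3) e3))" .
  then show ?thesis
    using e by (simp add: add4_VN smul4_VN)
qed

theorem lemma4p2:
  fixes \<sigma> :: "'w::idom \<Rightarrow> 'w"
    and red :: "'w \<Rightarrow> 'k::field"
    and p :: nat
    and a b :: 'k
    and a' b' :: 'w
  assumes p_prime: "prime p"
    and k_char: "CHAR('k) = p"
    and k_alg_closed: "\<forall>q :: 'k poly. degree q > 0 \<longrightarrow> (\<exists>x. poly q x = 0)"
    and sigma_bij: "bij \<sigma>"
    and sigma_add: "\<forall>x y. \<sigma> (x + y) = \<sigma> x + \<sigma> y"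
    and sigma_mult: "\<forall>x y. \<sigma> (x * y) = \<sigma> x * \<sigma> y"
    and sigma_one: "\<sigma> 1 = 1"
    and red_surj: "surj red"
    and red_add: "\<forall>x y. red (x + y) = red x + red y"
    and red_mult: "\<forall>x y. red (x * y) = red x * red y"
    and red_one: "red 1 = 1"
    and red_ker: "\<forall>c. red c = 0 \<longleftrightarrow> (of_nat p :: 'w) dvd c"
    and red_sigma: "\<forall>c. red (\<sigma> c) = red c ^ p"
    and W_sep: "\<forall>c. (\<forall>n. (of_nat p :: 'w) ^ n dvd c) \<longrightarrow> c = 0"
    and xi_proj: "(a, b) \<noteq> (0, 0)"
    and lift_a: "red a' = a"
    and lift_b: "red b' = b"
    and xi_not_Fp2: "\<not> (\<exists>c d :: 'k. (c, d) \<noteq> (0, 0) \<and> c ^ (p^2) = c \<and> d ^ (p^2) = d \<and> a * d = b * c)"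
  shows "ker_pi \<sigma> p \<subseteq> U_x \<sigma> p (a', 0, b', 0)"
proof
  fix \<phi> assume ker: "\<phi> \<in> ker_pi \<sigma> p"
  have inj: "inj \<sigma>"
    using sigma_bij by (rule bij_is_inj)
  have "\<sigma> 0 = 0"
    using sigma_add by (metis add_cancel_right_right)
  then have moved: "diff4 (\<phi> (a', 0, b', 0)) (a', 0, b', 0) \<in> VN p"
    using ker_pi_moves_into_VN[OF inj _ sigma_one ker] by blast
  have U: "\<phi> \<in> U_x1 \<sigma> p"
    using ker by (simp add: ker_pi_def)
  then have "\<phi> ` Mmod \<sigma> p (a', 0, b', 0) = Mmod \<sigma> p (a', 0, b', 0)"
    unfolding Mmod_eq_VN_coset[OF inj]
    using linear4_stabilises_coset_family[OF _ _ U_x1_stabilises_VN[OF inj U]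
        add4_VN smul4_VN moved]
    by (simp add: U_x1_def)
  with U show "\<phi> \<in> U_x \<sigma> p (a', 0, b', 0)"
    by (simp add: U_x_def)
qed

end
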